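(* Let $\mathfrak{S}_n$ be the symmetric group on $[n]$. For $\pi\in\mathfrak{S}_n$ let $c_m(\pi)$ be its number of $m$-cycles and $\mathrm{da}(\pi)=|\{i\in[n]:\pi(i)\neq\pi^{-1}(i)\}|$. Then $$\sum_{n\ge0}\sum_{\pi\in\mathfrak{S}_n} r^{c_1(\pi)}s^{c_2(\pi)}t^{\mathrm{da}(\pi)}\frac{x^n}{n!}=\frac{e^{(r-t)x+(s-t^2)x^2/2}}{1-tx}.$$
   Context: $[n]=\{1,\dots,n\}$. *)

theory Defs
  imports "HOL-Combinatorics.Permutations" "HOL-Computational_Algebra.Formal_Power_Series"
begin

definition perm_orbit :: "(nat \<Rightarrow> nat) \<Rightarrow> nat \<Rightarrow> nat set" where
  "perm_orbit p i = {(p ^^ k) i | k. True}"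

definition num_cycles :: "nat \<Rightarrow> nat \<Rightarrow> (nat \<Rightarrow> nat) \<Rightarrow> nat" where
  "num_cycles n m p = card {C. \<exists>i\<in>{1..n}. C = perm_orbit p i \<and> card C = m}"

definition da :: "nat \<Rightarrow> (nat \<Rightarrow> nat) \<Rightarrow> nat" where
  "da n p = card {i\<in>{1..n}. p i \<noteq> inv p i}"

end

theory Submission
  imports Defs "HOL-Combinatorics.Orbits"
begin

unbundle fps_syntax

(*
  Give a cycle of length k the weight g k, where g 1 = r, g 2 = s and g k = t^k for k \<ge> 3.
  The points i with p i \<noteq> inv p i are exactly the points on cycles of length at least 3,
  so each summand is the product of the weights of the cycles of p.

  For such cycle-weighted sums a_n over the permutations of an n-set, write a permutation of
  insert a S as (a b) \<circ> q with q permuting S: for b = a the point a is fixed, otherwise a is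
  spliced into the cycle of q through b. Counting by the length k + 1 of the cycle through a
  gives a_(n+1) = \<Sum>k\<le>n. n!/(n-k)! g (k+1) a_(n-k), i.e. F' = (\<Sum>k. g (k+1) x^k) F for the
  exponential generating function F. Since \<Sum>k. g (k+1) x^k = (r - t) + (s - t^2) x + t/(1 - t x),
  the right-hand side satisfies the same linear differential equation, with the same
  constant term 1.
*)

lemma permutation_orbit_eq:
  assumes "permutation f" "y \<in> orbit f x"
  shows "orbit f y = orbit f x"
  using orbit_cyclic_eq3[OF cyclic_on_orbit'[OF assms(1)] assms(2)] .

definition perm_cycles :: "'b set \<Rightarrow> ('b \<Rightarrow> 'b) \<Rightarrow> 'b set set" where
  "perm_cycles S p = orbit p ` S"

definition cycle_weight_sum :: "(nat \<Rightarrow> 'a::comm_ring_1) \<Rightarrow> 'b set \<Rightarrow> 'a" where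
  "cycle_weight_sum g S = (\<Sum>p\<in>{p. p permutes S}. \<Prod>C\<in>perm_cycles S p. g (card C))"

definition rooted_cycle_weight_sum ::
    "(nat \<Rightarrow> 'a::comm_ring_1) \<Rightarrow> (nat \<Rightarrow> 'a) \<Rightarrow> 'b set \<Rightarrow> 'b \<Rightarrow> 'a" where
  "rooted_cycle_weight_sum u g S b =
     (\<Sum>q\<in>{q. q permutes S}. u (card (orbit q b)) * (\<Prod>C\<in>perm_cycles S q - {orbit q b}. g (card C)))"

lemma cycle_weight_sum_eq_rooted:
  assumes "finite S" "b \<in> S"
  shows "cycle_weight_sum g S = rooted_cycle_weight_sum g g S b"
  unfolding cycle_weight_sum_def rooted_cycle_weight_sum_def
proof (rule sum.cong[OF refl])
  fix q
  have "orbit q b \<in> perm_cycles S q" "finite (perm_cycles S q)"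
    using assms by (simp_all add: perm_cycles_def)
  then show "(\<Prod>C\<in>perm_cycles S q. g (card C)) =
      g (card (orbit q b)) * (\<Prod>C\<in>perm_cycles S q - {orbit q b}. g (card C))"
    by (simp add: prod.remove)
qed

lemma perm_cycles_insert_fixpoint:
  assumes "q permutes S" "a \<notin> S"
  shows "perm_cycles (insert a S) q - {orbit q a} = perm_cycles S q"
proof -
  have "orbit q a = {a}"
    using assms permutes_not_in orbit_eq_singleton_iff by metis
  moreover have "{a} \<notin> perm_cycles S q"
    using permutes_orbit_subset[OF assms(1)] assms(2) by (auto simp: perm_cycles_def)
  ultimately show ?thesis by (auto simp: perm_cycles_def)
qed

lemma orbit_transpose_comp_self:
  assumes fin: "finite S" and q: "q permutes S" and aS: "a \<notin> S" and bS: "b \<in> S"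
  shows "orbit (transpose a b \<circ> q) a = insert a (orbit q b)"
proof -
  define p where "p = transpose a b \<circ> q"
  have permp: "permutation p"
    unfolding p_def using fin q bS
    by (auto simp: permutation_permutes intro!: exI[of _ "insert a S"]
        permutes_compose[OF permutes_subset[OF q] permutes_swap_id])
  have qa: "q a = a" using q aS permutes_not_in by metis
  have pa: "p a = b" by (simp add: p_def qa)
  have pval: "p y = q y" if "y \<in> S" "q y \<noteq> b" for y
    using that aS q by (auto simp: p_def transpose_def permutes_in_image)
  have pb: "p y = a" if "q y = b" for y using that by (simp add: p_def)
  have qorb: "orbit q y \<subseteq> S" if "y \<in> S" for y using permutes_orbit_subset[OF q that] .
  have "permutation q" using fin q by (auto simp: permutation_permutes)
  then have bq: "b \<in> orbit q b" by (rule permutation_self_in_orbit)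
  have bp: "b \<in> orbit p a" using pa orbit.base by metis
  have "orbit p a \<subseteq> insert a (orbit q b)"
  proof
    fix y assume "y \<in> orbit p a"
    then show "y \<in> insert a (orbit q b)"
    proof induction
      case base then show ?case using pa bq by simp
    next
      case (step y)
      then consider "y = a" | "y \<in> orbit q b" by blast
      then show ?case
      proof cases
        case 1 then show ?thesis using pa bq by simp
      next
        case 2
        then show ?thesis
          using pb pval[of y] qorb[OF bS] orbit.step[OF 2] by (cases "q y = b") auto
      qed
    qed
  qed
  moreover have "orbit q b \<subseteq> orbit p a"
  proof
    have closed: "q y \<in> orbit p a" if "y \<in> orbit p a" "y \<in> S" for y
      using that bp pval[of y] orbit.step[OF that(1)] by (cases "q y = b") auto
    fix y assume "y \<in> orbit q b"
    then show "y \<in> orbit p a"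
      by induction (use closed bp bS qorb[OF bS] in auto)
  qed
  moreover have "a \<in> orbit p a" using permutation_self_in_orbit[OF permp] .
  ultimately show ?thesis unfolding p_def by blast
qed

lemma orbit_transpose_comp_other:
  assumes fin: "finite S" and q: "q permutes S" and aS: "a \<notin> S"
    and yS: "y \<in> S" and y: "y \<notin> orbit q b"
  shows "orbit (transpose a b \<circ> q) y = orbit q y"
proof (rule orbit_cong)
  have permq: "permutation q" using fin q by (auto simp: permutation_permutes)
  show "y \<in> orbit q y" using permutation_self_in_orbit[OF permq] .
  fix z assume z: "z \<in> orbit q y"
  have "q z \<noteq> b"
  proof
    assume "q z = b"
    then have "b \<in> orbit q y" using z by (metis orbit.step)
    then show False
      using y permutation_orbit_eq[OF permq] permutation_self_in_orbit[OF permq] by metis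
  qed
  moreover have "z \<in> S" using permutes_orbit_subset[OF q yS] z by blast
  ultimately show "(transpose a b \<circ> q) z = q z"
    using aS q by (auto simp: transpose_def permutes_in_image)
qed

lemma perm_cycles_transpose_comp:
  assumes fin: "finite S" and q: "q permutes S" and aS: "a \<notin> S" and bS: "b \<in> S"
  defines "p \<equiv> transpose a b \<circ> q"
  shows "perm_cycles (insert a S) p - {orbit p a} = perm_cycles S q - {orbit q b}"
proof -
  have permq: "permutation q" using fin q by (auto simp: permutation_permutes)
  have "p permutes insert a S"
    unfolding p_def using bS
    by (auto intro: permutes_compose[OF permutes_subset[OF q] permutes_swap_id])
  then have permp: "permutation p" using fin by (auto simp: permutation_permutes)
  note self = orbit_transpose_comp_self[OF fin q aS bS, folded p_def]
  note other = orbit_transpose_comp_other[OF fin q aS, of _ b, folded p_def]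
  show ?thesis
  proof (intro set_eqI iffI)
    fix C assume "C \<in> perm_cycles (insert a S) p - {orbit p a}"
    then obtain y where y: "y \<in> insert a S" "C = orbit p y" "C \<noteq> orbit p a"
      by (auto simp: perm_cycles_def)
    then have "y \<notin> orbit p a" using permutation_orbit_eq[OF permp] by blast
    then have yS: "y \<in> S" "y \<notin> orbit q b" using y(1) self by auto
    then have "orbit q y \<noteq> orbit q b" using permutation_self_in_orbit[OF permq] by blast
    then show "C \<in> perm_cycles S q - {orbit q b}"
      using yS y(2) other[OF yS] by (auto simp: perm_cycles_def)
  next
    fix C assume "C \<in> perm_cycles S q - {orbit q b}"
    then obtain y where y: "y \<in> S" "C = orbit q y" "C \<noteq> orbit q b"
      by (auto simp: perm_cycles_def)
    then have ny: "y \<notin> orbit q b" using permutation_orbit_eq[OF permq] by metis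
    then have "y \<notin> orbit p a" using self y(1) aS by auto
    then have "orbit p y \<noteq> orbit p a" using permutation_self_in_orbit[OF permp] by blast
    then show "C \<in> perm_cycles (insert a S) p - {orbit p a}"
      using y other[OF y(1) ny] by (auto simp: perm_cycles_def)
  qed
qed

lemma rooted_cycle_weight_sum_insert:
  assumes fin: "finite S" and aS: "a \<notin> S"
  shows "rooted_cycle_weight_sum u g (insert a S) a =
    u 1 * cycle_weight_sum g S + (\<Sum>b\<in>S. rooted_cycle_weight_sum (u \<circ> Suc) g S b)"
proof -
  let ?f = "\<lambda>p. u (card (orbit p a)) * (\<Prod>C\<in>perm_cycles (insert a S) p - {orbit p a}. g (card C))"
  have "rooted_cycle_weight_sum u g (insert a S) a =
      (\<Sum>b\<in>insert a S. \<Sum>q\<in>{p. p permutes S}. ?f (transpose a b \<circ> q))"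
    unfolding rooted_cycle_weight_sum_def by (rule sum_over_permutations_insert[OF fin aS])
  also have "\<dots> = (\<Sum>q\<in>{p. p permutes S}. ?f q) +
      (\<Sum>b\<in>S. \<Sum>q\<in>{p. p permutes S}. ?f (transpose a b \<circ> q))"
    using fin aS by simp
  also have "(\<Sum>q\<in>{p. p permutes S}. ?f q) = u 1 * cycle_weight_sum g S"
    unfolding cycle_weight_sum_def sum_distrib_left
  proof (rule sum.cong[OF refl])
    fix q assume "q \<in> {p. p permutes S}"
    then have q: "q permutes S" by simp
    then have "orbit q a = {a}" using aS permutes_not_in orbit_eq_singleton_iff by metis
    then show "?f q = u 1 * (\<Prod>C\<in>perm_cycles S q. g (card C))"
      using perm_cycles_insert_fixpoint[OF q aS] by simp
  qed
  also have "(\<Sum>b\<in>S. \<Sum>q\<in>{p. p permutes S}. ?f (transpose a b \<circ> q)) =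
      (\<Sum>b\<in>S. rooted_cycle_weight_sum (u \<circ> Suc) g S b)"
    unfolding rooted_cycle_weight_sum_def
  proof (intro sum.cong refl)
    fix b q assume "b \<in> S" "q \<in> {p. p permutes S}"
    then have bS: "b \<in> S" and q: "q permutes S" by simp_all
    have "finite (orbit q b)" "a \<notin> orbit q b"
      using permutes_orbit_subset[OF q bS] fin aS finite_subset by blast+
    then show "?f (transpose a b \<circ> q) =
        (u \<circ> Suc) (card (orbit q b)) * (\<Prod>C\<in>perm_cycles S q - {orbit q b}. g (card C))"
      using orbit_transpose_comp_self[OF fin q aS bS] perm_cycles_transpose_comp[OF fin q aS bS]
      by simp
  qed
  finally show ?thesis .
qed

lemma rooted_cycle_weight_sum_expand:
  fixes g :: "nat \<Rightarrow> 'a::field_char_0" and S :: "nat set"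
  assumes "finite S" "card S = Suc n" "b \<in> S"
  shows "rooted_cycle_weight_sum u g S b =
    (\<Sum>k\<le>n. of_nat (fact n) / of_nat (fact (n - k)) * u (Suc k) * cycle_weight_sum g {1..n - k})"
  using assms
proof (induction n arbitrary: S u b)
  case 0
  then have "S = insert b {}" by (auto simp: card_Suc_eq)
  then show ?case
    by (simp add: rooted_cycle_weight_sum_insert cycle_weight_sum_def perm_cycles_def)
next
  case (Suc m)
  define S' where "S' = S - {b}"
  have S: "S = insert b S'" and bS': "b \<notin> S'" and fS': "finite S'" and cS': "card S' = Suc m"
    using Suc.prems by (auto simp: S'_def)
  \<comment> \<open>The induction hypothesis at two different roots shows that the sum depends only on
    the cardinality of the ground set.\<close>
  have relabel: "cycle_weight_sum g S' = cycle_weight_sum g {1..Suc m}"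
  proof -
    obtain c where c: "c \<in> S'" using cS' by fastforce
    have "cycle_weight_sum g S' = rooted_cycle_weight_sum g g S' c"
      using cycle_weight_sum_eq_rooted[OF fS' c] .
    also have "\<dots> = rooted_cycle_weight_sum g g {1..Suc m} 1"
      using Suc.IH[OF fS' cS' c] Suc.IH[where S = "{1..Suc m}" and b = 1] by simp
    also have "\<dots> = cycle_weight_sum g {1..Suc m}"
      by (rule cycle_weight_sum_eq_rooted[symmetric]) auto
    finally show ?thesis .
  qed
  let ?T = "\<lambda>k. of_nat (fact m) / of_nat (fact (m - k)) * u (Suc (Suc k)) * cycle_weight_sum g {1..m - k}"
  have "rooted_cycle_weight_sum u g S b =
      u 1 * cycle_weight_sum g S' + (\<Sum>c\<in>S'. rooted_cycle_weight_sum (u \<circ> Suc) g S' c)"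
    unfolding S by (rule rooted_cycle_weight_sum_insert[OF fS' bS'])
  also have "(\<Sum>c\<in>S'. rooted_cycle_weight_sum (u \<circ> Suc) g S' c) = of_nat (Suc m) * (\<Sum>k\<le>m. ?T k)"
    using Suc.IH fS' cS' by simp
  also have "\<dots> = (\<Sum>k\<le>m. of_nat (fact (Suc m)) / of_nat (fact (Suc m - Suc k)) *
      u (Suc (Suc k)) * cycle_weight_sum g {1..Suc m - Suc k})"
    unfolding sum_distrib_left by (intro sum.cong) (auto simp: fact_Suc field_simps)
  finally show ?case
    unfolding relabel by (subst sum.atMost_Suc_shift) (simp del: fact_Suc)
qed

lemma cycle_weight_sum_Suc:
  fixes g :: "nat \<Rightarrow> 'a::field_char_0"
  shows "cycle_weight_sum g {1..Suc n} =
    (\<Sum>k\<le>n. of_nat (fact n) / of_nat (fact (n - k)) * g (Suc k) * cycle_weight_sum g {1..n - k})"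
proof -
  have "cycle_weight_sum g {1..Suc n} = rooted_cycle_weight_sum g g {1..Suc n} 1"
    by (rule cycle_weight_sum_eq_rooted) auto
  then show ?thesis by (simp add: rooted_cycle_weight_sum_expand)
qed

lemma cycle_weight_egf_deriv:
  fixes g :: "nat \<Rightarrow> 'a::field_char_0"
  shows "fps_deriv (Abs_fps (\<lambda>n. cycle_weight_sum g {1..n} / of_nat (fact n))) =
    Abs_fps (\<lambda>k. g (Suc k)) * Abs_fps (\<lambda>n. cycle_weight_sum g {1..n} / of_nat (fact n))"
    (is "fps_deriv ?F = _ * ?F")
proof (rule fps_ext)
  fix n
  have "fps_deriv ?F $ n = cycle_weight_sum g {1..Suc n} / of_nat (fact n)"
    by (simp add: fact_Suc field_simps del: of_nat_Suc)
  also have "\<dots> = (\<Sum>k\<le>n. g (Suc k) * (cycle_weight_sum g {1..n - k} / of_nat (fact (n - k))))"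
    unfolding cycle_weight_sum_Suc sum_divide_distrib by (intro sum.cong) auto
  also have "\<dots> = (Abs_fps (\<lambda>k. g (Suc k)) * ?F) $ n"
    by (simp add: fps_mult_nth atLeast0AtMost)
  finally show "fps_deriv ?F $ n = (Abs_fps (\<lambda>k. g (Suc k)) * ?F) $ n" .
qed

lemma fps_linear_ode_unique:
  fixes F G D :: "'a :: field_char_0 fps"
  assumes "fps_deriv F = D * F" "fps_deriv G = D * G" "F $ 0 = G $ 0"
  shows "F = G"
proof -
  have "\<forall>m\<le>n. F $ m = G $ m" for n
  proof (induction n)
    case 0 then show ?case using assms(3) by simp
  next
    case (Suc n)
    have "fps_deriv F $ n = fps_deriv G $ n"
      unfolding assms(1,2) fps_mult_nth using Suc by (intro sum.cong) auto
    then have "F $ Suc n = G $ Suc n" by (simp del: of_nat_Suc)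
    then show ?case using Suc by (auto simp: le_Suc_eq)
  qed
  then show ?thesis by (auto simp: fps_eq_iff)
qed

lemma fps_inverse_one_minus_const_X:
  fixes t :: "'a :: field"
  shows "inverse (1 - fps_const t * fps_X) = Abs_fps (\<lambda>n. t ^ n)"
proof (rule fps_inverse_unique, rule fps_ext)
  fix n
  show "((1 - fps_const t * fps_X) * Abs_fps (\<lambda>n. t ^ n)) $ n = 1 $ n"
    by (cases n) (simp_all add: algebra_simps fps_mult_left_const_nth)
qed

definition cycle_weight :: "'a::comm_ring_1 \<Rightarrow> 'a \<Rightarrow> 'a \<Rightarrow> nat \<Rightarrow> 'a" where
  "cycle_weight r s t k = (if k = 1 then r else if k = 2 then s else t ^ k)"

lemma exp_quadratic_times_geometric_deriv:
  fixes r s t :: "'a :: field_char_0"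
  defines "R \<equiv> (fps_exp 1 oo (fps_const (r - t) * fps_X + fps_const ((s - t ^ 2) / 2) * fps_X ^ 2))
           * inverse (1 - fps_const t * fps_X)"
  shows "fps_deriv R = Abs_fps (\<lambda>k. cycle_weight r s t (Suc k)) * R"
proof -
  define P where "P = fps_const (r - t) * fps_X + fps_const ((s - t ^ 2) / 2) * fps_X ^ 2"
  define I where "I = inverse (1 - fps_const t * fps_X)"
  have "fps_deriv (fps_exp 1 oo P) = (fps_exp 1 oo P) * fps_deriv P"
    using fps_compose_deriv[of P "fps_exp 1"] by (simp add: P_def)
  moreover have "fps_deriv I = fps_const t * I ^ 2"
    unfolding I_def using fps_inverse_deriv[of "1 - fps_const t * fps_X"] by simp
  moreover have "Abs_fps (\<lambda>k. cycle_weight r s t (Suc k)) = fps_deriv P + fps_const t * I"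
  proof (rule fps_ext)
    fix n
    show "Abs_fps (\<lambda>k. cycle_weight r s t (Suc k)) $ n = (fps_deriv P + fps_const t * I) $ n"
      unfolding I_def fps_inverse_one_minus_const_X
      by (cases n; cases "n - 1")
        (auto simp: cycle_weight_def P_def fps_X_power_nth fps_numeral_nth power2_eq_square field_simps)
  qed
  moreover have "R = (fps_exp 1 oo P) * I" by (simp add: R_def P_def I_def)
  ultimately show ?thesis by (simp add: algebra_simps power2_eq_square)
qed

lemma card_orbit_le_2_iff:
  assumes "permutation p"
  shows "card (orbit p i) \<in> {1, 2} \<longleftrightarrow> p (p i) = i"
proof
  have fin: "finite (orbit p i)" using finite_orbit[OF permutation_self_in_orbit[OF assms]] .
  have sub: "{i, p i, p (p i)} \<subseteq> orbit p i"
    using permutation_self_in_orbit[OF assms] by (auto intro: orbit.intros)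
  assume c: "card (orbit p i) \<in> {1, 2}"
  show "p (p i) = i"
  proof (rule ccontr)
    assume ne: "p (p i) \<noteq> i"
    then have "p i \<noteq> i" "p (p i) \<noteq> p i"
      using injD[OF bij_is_inj[OF permutation_bijective[OF assms]]] by metis+
    then have "card {i, p i, p (p i)} = 3" using ne by auto
    then show False using card_mono[OF fin sub] c by auto
  qed
next
  assume h: "p (p i) = i"
  have sub: "orbit p i \<subseteq> {i, p i}"
  proof
    fix y assume "y \<in> orbit p i"
    then show "y \<in> {i, p i}" by induction (use h in auto)
  qed
  have "card (orbit p i) \<le> 2"
    using card_mono[OF _ sub] card_insert_le_m1[of 2 "{p i}" i] by simp
  moreover have "card (orbit p i) \<noteq> 0"
    using sub orbit_nonempty[of p i] finite_subset[OF sub] by auto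
  ultimately show "card (orbit p i) \<in> {1, 2}" by auto
qed

lemma neq_inv_points_eq_Union_long_cycles:
  assumes p: "p permutes S" and fin: "finite S"
  shows "{i\<in>S. p i \<noteq> inv p i} = \<Union>{C\<in>perm_cycles S p. card C \<notin> {1, 2}}"
proof -
  have perm: "permutation p" using p fin by (auto simp: permutation_permutes)
  have long_iff: "p i \<noteq> inv p i \<longleftrightarrow> card (orbit p i) \<notin> {1, 2}" for i
    using card_orbit_le_2_iff[OF perm, of i] permutes_inverses[OF p] by metis
  show ?thesis
  proof (intro set_eqI iffI)
    fix z assume "z \<in> \<Union>{C\<in>perm_cycles S p. card C \<notin> {1, 2}}"
    then obtain i where i: "i \<in> S" "z \<in> orbit p i" "card (orbit p i) \<notin> {1, 2}"
      by (auto simp: perm_cycles_def)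
    then have "card (orbit p z) \<notin> {1, 2}" using permutation_orbit_eq[OF perm] by metis
    moreover have "z \<in> S" using permutes_orbit_subset[OF p i(1)] i(2) by blast
    ultimately show "z \<in> {i\<in>S. p i \<noteq> inv p i}" using long_iff by blast
  next
    fix z assume z: "z \<in> {i\<in>S. p i \<noteq> inv p i}"
    then have "card (orbit p z) \<notin> {1, 2}" using long_iff by blast
    moreover have "z \<in> orbit p z" using permutation_self_in_orbit[OF perm] .
    moreover have "orbit p z \<in> perm_cycles S p" using z by (simp add: perm_cycles_def)
    ultimately show "z \<in> \<Union>{C\<in>perm_cycles S p. card C \<notin> {1, 2}}" by blast
  qed
qed

lemma da_eq_sum_long_cycles:
  assumes p: "p permutes {1..n}"
  shows "da n p = (\<Sum>C\<in>{C\<in>perm_cycles {1..n} p. card C \<notin> {1, 2}}. card C)"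
proof -
  have perm: "permutation p" using p by (auto simp: permutation_permutes)
  have "pairwise disjnt (perm_cycles {1..n} p)"
  proof (rule pairwiseI)
    fix C D assume "C \<in> perm_cycles {1..n} p" "D \<in> perm_cycles {1..n} p" "C \<noteq> D"
    then obtain x y where "C = orbit p x" "D = orbit p y" "orbit p x \<noteq> orbit p y"
      by (auto simp: perm_cycles_def)
    then show "disjnt C D"
      unfolding disjnt_def using permutation_orbit_eq[OF perm] by blast
  qed
  moreover have "finite C" if "C \<in> perm_cycles {1..n} p" for C
    using that finite_orbit[OF permutation_self_in_orbit[OF perm]] by (auto simp: perm_cycles_def)
  ultimately show ?thesis
    unfolding da_def neq_inv_points_eq_Union_long_cycles[OF p finite_atLeastAtMost]
    by (intro card_Union_disjoint) (auto simp: pairwise_def)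
qed

lemma num_cycles_eq_card_perm_cycles:
  assumes p: "p permutes {1..n}"
  shows "num_cycles n m p = card {C\<in>perm_cycles {1..n} p. card C = m}"
proof -
  have "permutation p" using p by (auto simp: permutation_permutes)
  then have "perm_orbit p = orbit p"
    by (simp add: fun_eq_iff perm_orbit_def orbit_altdef_permutation)
  then show ?thesis unfolding num_cycles_def perm_cycles_def by (simp add: image_def)
qed

lemma statistics_weight_eq_prod_cycle_weight:
  fixes r s t :: "'a :: comm_ring_1"
  assumes p: "p permutes {1..n}"
  shows "r ^ num_cycles n 1 p * s ^ num_cycles n 2 p * t ^ da n p =
    (\<Prod>C\<in>perm_cycles {1..n} p. cycle_weight r s t (card C))"
proof -
  let ?Cs = "perm_cycles {1..n} p"
  have fin: "finite ?Cs" by (simp add: perm_cycles_def)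
  have "(\<Prod>C\<in>?Cs. cycle_weight r s t (card C)) =
      (\<Prod>C\<in>?Cs. if card C = 1 then r else 1) * (\<Prod>C\<in>?Cs. if card C = 2 then s else 1) *
      (\<Prod>C\<in>?Cs. if card C \<notin> {1, 2} then t ^ card C else 1)"
    unfolding prod.distrib[symmetric] by (intro prod.cong) (auto simp: cycle_weight_def)
  also have "\<dots> = r ^ num_cycles n 1 p * s ^ num_cycles n 2 p * t ^ da n p"
    using fin
    by (simp add: prod.If_cases Int_def power_sum num_cycles_eq_card_perm_cycles[OF p]
        da_eq_sum_long_cycles[OF p])
  finally show ?thesis by (rule sym)
qed

theorem mainTheorem16:
  fixes r s t :: "'a :: field_char_0"
  shows "Abs_fps (\<lambda>n. (\<Sum>p\<in>{p. p permutes {1..n}}.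
             r ^ num_cycles n 1 p * s ^ num_cycles n 2 p * t ^ da n p) / of_nat (fact n))
         = (fps_exp 1 oo (fps_const (r - t) * fps_X + fps_const ((s - t ^ 2) / 2) * fps_X ^ 2))
           * inverse (1 - fps_const t * fps_X)"
  (is "?F = ?R")
proof -
  have "(\<Sum>p\<in>{p. p permutes {1..n}}. r ^ num_cycles n 1 p * s ^ num_cycles n 2 p * t ^ da n p) =
      cycle_weight_sum (cycle_weight r s t) {1..n}" for n
    unfolding cycle_weight_sum_def
    by (intro sum.cong refl statistics_weight_eq_prod_cycle_weight) simp
  then have "?F = Abs_fps (\<lambda>n. cycle_weight_sum (cycle_weight r s t) {1..n} / of_nat (fact n))"
    (is "_ = ?G") by simp
  also have "?G = ?R"
  proof (rule fps_linear_ode_unique)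
    show "fps_deriv ?G = Abs_fps (\<lambda>k. cycle_weight r s t (Suc k)) * ?G"
      by (rule cycle_weight_egf_deriv)
    show "fps_deriv ?R = Abs_fps (\<lambda>k. cycle_weight r s t (Suc k)) * ?R"
      by (rule exp_quadratic_times_geometric_deriv)
    show "?G $ 0 = ?R $ 0"
      by (simp add: cycle_weight_sum_def perm_cycles_def)
  qed
  finally show ?thesis .
qed

end
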